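(* Let $\varphi(x)=a_nx^n+\cdots+a_1x+a_0\in\mathbb{C}[x]$ with $a_n\neq0$ have $n$ distinct roots $x_1,\dots,x_n$. For any rational function $h(x)\in R$, $$\sum_{i=1}^n h(x_i)=\frac{b_{n-1}}{a_n},$$ where $b_{n-1}$ is the coefficient of $x^{n-1}$ in the unique polynomial $r(x)$ of degree less than $n$ lying in the coset $\overline{\varphi'(x)h(x)}\in R/(\varphi(x))$.
   Context: $R\subset\mathbb{C}(x)$ denotes the subring of rational functions $p(x)/q(x)$ with $p,q\in\mathbb{C}[x]$ and $q(x_i)\neq0$ for every root $x_i$ of $\varphi$. $(\varphi(x))$ is the ideal of $R$ generated by $\varphi$, and cosets in $R/(\varphi(x))$ are denoted by an overbar. Every coset of $R/(\varphi(x))$ contains a unique polynomial of degree less than $n$. *)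

theory Defs
  imports "HOL-Computational_Algebra.Polynomial" "HOL-Computational_Algebra.Fraction_Field"
begin

text \<open>Rational functions over C are modelled as elements of the fraction field of complex poly.
  Embedding of polynomials into rational functions.\<close>
definition rf :: "complex poly \<Rightarrow> complex poly fract" where
  "rf p = Fract p 1"

definition ringR :: "complex poly \<Rightarrow> complex poly fract set" where
  "ringR \<phi> = {Fract p q | p q. q \<noteq> 0 \<and> (\<forall>x. poly \<phi> x = 0 \<longrightarrow> poly q x \<noteq> 0)}"

definition same_coset :: "complex poly \<Rightarrow> complex poly fract \<Rightarrow> complex poly fract \<Rightarrow> bool" where
  "same_coset \<phi> f g \<longleftrightarrow> (\<exists>s \<in> ringR \<phi>. f - g = rf \<phi> * s)"

end

theory Submission
  imports Defs
begin

text \<open>If \<open>r\<close> represents \<open>\<phi>' h\<close> modulo \<open>\<phi>\<close>, then \<open>r(x\<^sub>i) = \<phi>'(x\<^sub>i) h(x\<^sub>i)\<close> at every root.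
  Since \<open>deg r < n\<close> and the roots are distinct, \<open>r\<close> is the Lagrange interpolant
  \<open>\<Sum>\<^sub>i r(x\<^sub>i)/\<phi>'(x\<^sub>i) \<cdot> \<phi>(x)/(x - x\<^sub>i)\<close>, and each \<open>\<phi>(x)/(x - x\<^sub>i)\<close> has leading
  coefficient \<open>a\<^sub>n\<close> in degree \<open>n - 1\<close>; comparing coefficients of \<open>x\<^sup>n\<^sup>-\<^sup>1\<close> gives the claim.\<close>

lemma poly_eq_at_root_if_same_coset:
  fixes \<phi> a p q r :: "complex poly"
  assumes "q \<noteq> 0"
    and "\<forall>x. poly \<phi> x = 0 \<longrightarrow> poly q x \<noteq> 0"
    and "same_coset \<phi> (rf a * Fract p q) (rf r)"
    and "poly \<phi> x = 0"
  shows "poly r x = poly a x * (poly p x / poly q x)"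
proof -
  obtain s where "s \<in> ringR \<phi>" and s: "rf a * Fract p q - rf r = rf \<phi> * s"
    using assms(3) unfolding same_coset_def by blast
  then obtain u v where uv: "s = Fract u v" "v \<noteq> 0" "\<forall>x. poly \<phi> x = 0 \<longrightarrow> poly v x \<noteq> 0"
    unfolding ringR_def by blast
  have "Fract (a * p - r * q) q = Fract (\<phi> * u) v"
    using s assms(1) uv(1) by (simp add: rf_def)
  hence "(a * p - r * q) * v = (\<phi> * u) * q"
    using assms(1) uv(2) by (simp add: eq_fract)
  hence "poly ((a * p - r * q) * v) x = 0"
    using assms(4) by simp
  hence "poly a x * poly p x - poly r x * poly q x = 0"
    using uv(3) assms(4) by simp
  thus ?thesis using assms(2,4) by (simp add: field_simps)
qed

lemma linear_factor_mult_div: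
  fixes \<phi> :: "'a::field poly"
  assumes "poly \<phi> x = 0"
  shows "[:-x, 1:] * (\<phi> div [:-x, 1:]) = \<phi>"
  using assms by (metis dvd_mult_div_cancel poly_eq_0_iff_dvd)

lemma degree_div_linear_factor:
  fixes \<phi> :: "'a::field poly"
  assumes "poly \<phi> x = 0" and "\<phi> \<noteq> 0"
  shows "degree (\<phi> div [:-x, 1:]) = degree \<phi> - 1"
proof -
  have "\<phi> div [:-x, 1:] \<noteq> 0"
    using linear_factor_mult_div[OF assms(1)] assms(2) by auto
  hence "degree ([:-x, 1:] * (\<phi> div [:-x, 1:])) = 1 + degree (\<phi> div [:-x, 1:])"
    by (subst degree_mult_eq) auto
  thus ?thesis
    unfolding linear_factor_mult_div[OF assms(1)] by simp
qed

lemma lead_coeff_div_linear_factor: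
  fixes \<phi> :: "'a::field poly"
  assumes "poly \<phi> x = 0"
  shows "lead_coeff (\<phi> div [:-x, 1:]) = lead_coeff \<phi>"
  using arg_cong[OF linear_factor_mult_div[OF assms], of lead_coeff]
  by (simp only: lead_coeff_mult) simp

lemma poly_div_linear_factor_at_other_root:
  fixes \<phi> :: "'a::field poly"
  assumes "poly \<phi> x = 0" and "poly \<phi> y = 0" and "y \<noteq> x"
  shows "poly (\<phi> div [:-x, 1:]) y = 0"
proof -
  have "(y - x) * poly (\<phi> div [:-x, 1:]) y = 0"
    using arg_cong[OF linear_factor_mult_div[OF assms(1)], of "\<lambda>f. poly f y"] assms(2)
    by (simp add: algebra_simps)
  thus ?thesis using assms(3) by simp
qed

lemma poly_pderiv_at_root:
  fixes \<phi> :: "'a::field poly"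
  assumes "poly \<phi> x = 0"
  shows "poly (pderiv \<phi>) x = poly (\<phi> div [:-x, 1:]) x"
proof -
  have "pderiv \<phi> = [:-x, 1:] * pderiv (\<phi> div [:-x, 1:]) + \<phi> div [:-x, 1:]"
    using arg_cong[OF linear_factor_mult_div[OF assms], of pderiv]
    by (simp only: pderiv_mult) (simp add: pderiv_pCons)
  thus ?thesis by simp
qed

lemma poly_pderiv_nonzero_if_distinct_roots:
  fixes \<phi> :: "'a::field poly"
  assumes "\<phi> \<noteq> 0" and "card {x. poly \<phi> x = 0} = degree \<phi>" and "poly \<phi> x = 0"
  shows "poly (pderiv \<phi>) x \<noteq> 0"
proof
  define f where "f = \<phi> div [:-x, 1:]"
  have f0: "f \<noteq> 0"
    using linear_factor_mult_div[OF assms(3)] assms(1) unfolding f_def by auto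
  assume "poly (pderiv \<phi>) x = 0"
  hence "{y. poly \<phi> y = 0} \<subseteq> {y. poly f y = 0}"
    using poly_pderiv_at_root[OF assms(3)] poly_div_linear_factor_at_other_root[OF assms(3)]
    unfolding f_def by auto
  hence "card {y. poly \<phi> y = 0} \<le> card {y. poly f y = 0}"
    using poly_roots_finite[OF f0] by (rule card_mono[rotated])
  also have "\<dots> \<le> degree \<phi> - 1"
    using card_poly_roots_bound[OF f0] degree_div_linear_factor[OF assms(3,1)]
    unfolding f_def by simp
  moreover have "degree \<phi> \<noteq> 0"
  proof
    assume "degree \<phi> = 0"
    then obtain c where "\<phi> = [:c:]" by (rule degree_eq_zeroE)
    thus False using assms(1,3) by simp
  qed
  ultimately show False
    using assms(2) by linarith
qed

lemma coeff_pred_degree_eq_sum_over_roots: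
  fixes \<phi> r :: "'a::field poly"
  assumes "\<phi> \<noteq> 0" and "card {x. poly \<phi> x = 0} = degree \<phi>" and "degree r < degree \<phi>"
  shows "coeff r (degree \<phi> - 1)
           = lead_coeff \<phi> * (\<Sum>x\<in>{x. poly \<phi> x = 0}. poly r x / poly (pderiv \<phi>) x)"
proof -
  define Z where "Z = {x. poly \<phi> x = 0}"
  define c where "c x = poly r x / poly (pderiv \<phi>) x" for x
  define g where "g = (\<Sum>x\<in>Z. smult (c x) (\<phi> div [:-x, 1:]))"
  have finZ: "finite Z"
    unfolding Z_def using assms(1) by (rule poly_roots_finite)
  have "degree g \<le> degree \<phi> - 1"
    unfolding g_def using assms(1)
    by (intro degree_sum_le finZ) (auto intro: order.trans[OF degree_smult_le]
        simp: Z_def degree_div_linear_factor)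
  moreover have "poly g y = poly r y" if "y \<in> Z" for y
  proof -
    have "poly g y = (\<Sum>x\<in>Z. c x * poly (\<phi> div [:-x, 1:]) y)"
      unfolding g_def by (simp add: poly_sum)
    also have "\<dots> = c y * poly (\<phi> div [:-y, 1:]) y"
    proof -
      have "(\<Sum>x\<in>Z - {y}. c x * poly (\<phi> div [:-x, 1:]) y) = 0"
        using that by (intro sum.neutral) (auto simp: Z_def poly_div_linear_factor_at_other_root)
      thus ?thesis by (simp add: sum.remove[OF finZ that])
    qed
    also have "\<dots> = poly r y"
      using that poly_pderiv_nonzero_if_distinct_roots[OF assms(1,2)]
      by (simp add: Z_def c_def poly_pderiv_at_root)
    finally show ?thesis .
  qed
  ultimately have "r = g"
    using assms(2,3) by (intro poly_eqI_degree[of Z]) (auto simp: Z_def)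
  hence "coeff r (degree \<phi> - 1) = (\<Sum>x\<in>Z. c x * coeff (\<phi> div [:-x, 1:]) (degree \<phi> - 1))"
    unfolding g_def by (simp add: coeff_sum)
  also have "\<dots> = (\<Sum>x\<in>Z. c x * lead_coeff \<phi>)"
  proof (intro sum.cong refl)
    fix x assume "x \<in> Z"
    hence root: "poly \<phi> x = 0" by (simp add: Z_def)
    have "coeff (\<phi> div [:-x, 1:]) (degree \<phi> - 1) = lead_coeff \<phi>"
      using lead_coeff_div_linear_factor[OF root]
      by (simp only: degree_div_linear_factor[OF root assms(1), symmetric])
    thus "c x * coeff (\<phi> div [:-x, 1:]) (degree \<phi> - 1) = c x * lead_coeff \<phi>" by simp
  qed
  finally show ?thesis
    unfolding Z_def c_def by (simp add: sum_distrib_left mult.commute)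
qed

theorem corollary2:
  fixes \<phi> p q r :: "complex poly"
  assumes "degree \<phi> \<ge> 1"
    and "card {x. poly \<phi> x = 0} = degree \<phi>"
    and "q \<noteq> 0"
    and "\<forall>x. poly \<phi> x = 0 \<longrightarrow> poly q x \<noteq> 0"
    and "degree r < degree \<phi>"
    and "same_coset \<phi> (rf (pderiv \<phi>) * Fract p q) (rf r)"
  shows "(\<Sum>x\<in>{x. poly \<phi> x = 0}. poly p x / poly q x)
           = coeff r (degree \<phi> - 1) / lead_coeff \<phi>"
proof -
  have \<phi>0: "\<phi> \<noteq> 0" using assms(1) by auto
  have "poly r x / poly (pderiv \<phi>) x = poly p x / poly q x" if "poly \<phi> x = 0" for x
    using poly_eq_at_root_if_same_coset[OF assms(3,4,6) that]
      poly_pderiv_nonzero_if_distinct_roots[OF \<phi>0 assms(2) that] by simp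
  hence "coeff r (degree \<phi> - 1)
           = lead_coeff \<phi> * (\<Sum>x\<in>{x. poly \<phi> x = 0}. poly p x / poly q x)"
    using coeff_pred_degree_eq_sum_over_roots[OF \<phi>0 assms(2,5)] by simp
  thus ?thesis using \<phi>0 by (simp add: field_simps)
qed

end
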